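(* Let $G$ be a finite group and let $H\le K$ be core-free subgroups of $G$ with $|G:K|\ge2$. Then \[ \frac{\mathbf{m}(G\circlearrowright G/H)}{|K:H|}\le\mathbf{m}(G\circlearrowright G/K)\le\mathbf{m}(G\circlearrowright G/H). \]
   Context: For a core-free subgroup $L$ of $G$, $G\circlearrowright G/L$ denotes the (faithful, transitive) permutation group induced by the action of $G$ on the set $G/L$ of right cosets of $L$ by right multiplication. For a transitive permutation group $X$ on a finite set $\Omega$ with $|\Omega|\ge2$, a subset $A\subseteq\Omega$ is self-separable for $X$ if there exists $x\in X$ with $A\cap A^x=\emptyset$; $\mathbf{m}(X)$ is the minimum cardinality of a subset of $\Omega$ that is not self-separable for $X$. *)

theory Defs
  imports "HOL-Algebra.Algebra"
begin

definition core_free :: "('a, 'b) monoid_scheme \<Rightarrow> 'a set \<Rightarrow> bool" where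
  "core_free G L \<longleftrightarrow>
     (\<Inter>g\<in>carrier G. (inv\<^bsub>G\<^esub> g) <#\<^bsub>G\<^esub> (L #>\<^bsub>G\<^esub> g)) = {\<one>\<^bsub>G\<^esub>}"

definition coset_img :: "('a, 'b) monoid_scheme \<Rightarrow> 'a set set \<Rightarrow> 'a \<Rightarrow> 'a set set" where
  "coset_img G A x = (\<lambda>c. c #>\<^bsub>G\<^esub> x) ` A"

definition self_separable :: "('a, 'b) monoid_scheme \<Rightarrow> 'a set set \<Rightarrow> bool" where
  "self_separable G A \<longleftrightarrow> (\<exists>x\<in>carrier G. A \<inter> coset_img G A x = {})"

definition m_coset :: "('a, 'b) monoid_scheme \<Rightarrow> 'a set \<Rightarrow> nat" where
  "m_coset G L = (LEAST n. \<exists>A. A \<subseteq> rcosets\<^bsub>G\<^esub> L \<and> card A = n \<and> \<not> self_separable G A)"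

end

theory Submission
  imports Defs
begin

(* The projection H g \<mapsto> K g from G/H onto G/K commutes with the action of G, so it maps a
   set of cosets that meets each of its translates onto a set with the same property and no
   more elements: m(G/K) \<le> m(G/H). Conversely, the full preimage in G/H of such a set B of
   cosets of K again meets each of its translates, and its union lies in that of B, so it has
   at most |K:H| |B| elements: m(G/H) \<le> |K:H| m(G/K). *)

lemma not_self_separable_image:
  assumes equivariant: "\<And>a x. a \<in> A \<Longrightarrow> x \<in> carrier G \<Longrightarrow> f (a #>\<^bsub>G\<^esub> x) = f a #>\<^bsub>G\<^esub> x"
    and "\<not> self_separable G A"
  shows "\<not> self_separable G (f ` A)"
proof -
  have "f ` A \<inter> coset_img G (f ` A) x \<noteq> {}" if x: "x \<in> carrier G" for x
  proof -
    obtain a where a: "a \<in> A" "a #>\<^bsub>G\<^esub> x \<in> A"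
      using assms(2) x unfolding self_separable_def coset_img_def by blast
    then have "f a #>\<^bsub>G\<^esub> x \<in> f ` A \<inter> coset_img G (f ` A) x"
      using equivariant[OF a(1) x] unfolding coset_img_def by (metis IntI image_eqI)
    then show ?thesis by blast
  qed
  then show ?thesis unfolding self_separable_def by blast
qed

lemma m_coset_le_card:
  assumes "A \<subseteq> rcosets\<^bsub>G\<^esub> L" and "\<not> self_separable G A"
  shows "m_coset G L \<le> card A"
  unfolding m_coset_def using assms by (intro Least_le) blast

context group
begin

lemma rcos_rcos_inv [simp]:
  "M \<subseteq> carrier G \<Longrightarrow> x \<in> carrier G \<Longrightarrow> (M #> x) #> inv x = M"
  by (simp add: coset_mult_assoc)

lemma rcos_inv_rcos [simp]:
  "M \<subseteq> carrier G \<Longrightarrow> x \<in> carrier G \<Longrightarrow> (M #> inv x) #> x = M"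
  by (simp add: coset_mult_assoc)

lemma rcos_in_rcosets:
  assumes "H \<subseteq> carrier G" "c \<in> rcosets H" "x \<in> carrier G"
  shows "c #> x \<in> rcosets H"
proof -
  obtain g where "g \<in> carrier G" "c = H #> g"
    using assms(2) unfolding RCOSETS_def by blast
  then show ?thesis
    using assms by (simp add: coset_mult_assoc rcosetsI)
qed

lemma finite_rcosets:
  assumes "subgroup H G" "finite (carrier G)"
  shows "finite (rcosets H)"
  using assms rcosets_subset_PowG finite_subset by blast

lemma card_Union_rcosets:
  assumes "subgroup H G" "finite (carrier G)" "A \<subseteq> rcosets H"
  shows "card (\<Union>A) = card H * card A"
proof -
  have "card H * card A = card (\<Union>A)"
  proof (intro card_partition)
    show "finite A" using finite_rcosets[OF assms(1,2)] assms(3) finite_subset by blast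
    show "finite (\<Union>A)"
      using assms rcosets_part_G finite_subset by (metis Union_mono)
    show "\<And>c. c \<in> A \<Longrightarrow> card c = card H"
      using assms card_rcosets_equal subgroup.subset by (metis subsetD)
    show "\<And>c1 c2. c1 \<in> A \<Longrightarrow> c2 \<in> A \<Longrightarrow> c1 \<noteq> c2 \<Longrightarrow> c1 \<inter> c2 = {}"
      using rcos_disjoint[OF assms(1)] assms(3) unfolding pairwise_def disjnt_def by blast
  qed
  then show ?thesis by simp
qed

lemma subset_set_mult_subgroup:
  assumes "subgroup K G" "M \<subseteq> carrier G"
  shows "M \<subseteq> K <#> M"
  using assms subgroup.one_closed unfolding set_mult_def by fastforce

lemma set_mult_rcos_of_subset:
  assumes "subgroup H G" "subgroup K G" "H \<subseteq> K" "g \<in> carrier G"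
  shows "K <#> (H #> g) = K #> g"
  using assms setmult_rcos_assoc subgroup.subset
    set_mult_subgroup_idem[OF assms(2) subgroup_incl[OF assms(1-3)]] by metis

lemma set_mult_image_rcosets:
  assumes "subgroup H G" "subgroup K G" "H \<subseteq> K"
  shows "(\<lambda>c. K <#> c) ` (rcosets H) = rcosets K"
  unfolding RCOSETS_def image_UN by (simp add: set_mult_rcos_of_subset[OF assms])

lemma set_mult_rcos_rcosets:
  assumes "subgroup H G" "subgroup K G" "c \<in> rcosets H" "x \<in> carrier G"
  shows "K <#> (c #> x) = (K <#> c) #> x"
proof -
  have "c \<subseteq> carrier G" using assms(1,3) rcosets_subset_PowG by blast
  then show ?thesis using setmult_rcos_assoc[OF subgroup.subset[OF assms(2)] _ assms(4)] by simp
qed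

lemma not_self_separable_rcosets:
  assumes "subgroup H G"
  shows "\<not> self_separable G (rcosets H)"
proof -
  have H: "H \<subseteq> carrier G" using assms subgroup.subset by blast
  have "H \<in> rcosets H \<inter> coset_img G (rcosets H) x" if x: "x \<in> carrier G" for x
  proof -
    have "H #> inv x \<in> rcosets H" using H x by (simp add: rcosetsI)
    then have "(H #> inv x) #> x \<in> coset_img G (rcosets H) x"
      unfolding coset_img_def by blast
    then show ?thesis using H x rcosetsI[OF H one_closed] by simp
  qed
  then show ?thesis unfolding self_separable_def by blast
qed

lemma m_coset_attained:
  assumes "subgroup H G"
  obtains A where "A \<subseteq> rcosets H" "card A = m_coset G H" "\<not> self_separable G A"
proof -
  have "\<exists>n A. A \<subseteq> rcosets H \<and> card A = n \<and> \<not> self_separable G A"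
    using not_self_separable_rcosets[OF assms] by blast
  then show ?thesis
    using that LeastI_ex[where P = "\<lambda>n. \<exists>A. A \<subseteq> rcosets H \<and> card A = n \<and> \<not> self_separable G A"]
    unfolding m_coset_def by blast
qed

lemma not_self_separable_vimage:
  assumes "subgroup H G"
    and equivariant: "\<And>c x. c \<in> rcosets H \<Longrightarrow> x \<in> carrier G \<Longrightarrow> f (c #> x) = f c #> x"
    and "B \<subseteq> f ` (rcosets H)" and "\<not> self_separable G B"
  shows "\<not> self_separable G (rcosets H \<inter> f -` B)"
proof -
  have H: "H \<subseteq> carrier G" using assms(1) subgroup.subset by blast
  have cosets_carrier: "c \<subseteq> carrier G" if "c \<in> rcosets H" for c
    using that assms(1) rcosets_subset_PowG by blast
  let ?A = "rcosets H \<inter> f -` B"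
  have "?A \<inter> coset_img G ?A x \<noteq> {}" if x: "x \<in> carrier G" for x
  proof -
    obtain b where b: "b \<in> B" "b #> x \<in> B"
      using assms(4) x unfolding self_separable_def coset_img_def by blast
    obtain c where c: "c \<in> rcosets H" "f c = b #> x"
      using b(2) assms(3) by blast
    obtain c0 where c0: "c0 \<in> rcosets H" "f c0 = b"
      using b(1) assms(3) by blast
    have "(b #> x) #> inv x = f ((c0 #> x) #> inv x)"
      using c0 equivariant x rcos_in_rcosets[OF H] by simp
    also have "\<dots> = b"
      using c0 cosets_carrier x by simp
    finally have "f (c #> inv x) = b"
      using c equivariant x by simp
    then have "c #> inv x \<in> ?A"
      using b(1) c(1) rcos_in_rcosets[OF H] x by simp
    then have "c \<in> coset_img G ?A x"
      unfolding coset_img_def using c(1) cosets_carrier x by (metis image_eqI rcos_inv_rcos)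
    then show ?thesis using c b(2) by blast
  qed
  then show ?thesis unfolding self_separable_def by blast
qed

lemma m_coset_antimono:
  assumes "subgroup H G" "subgroup K G" "H \<subseteq> K" "finite (carrier G)"
  shows "m_coset G K \<le> m_coset G H"
proof -
  obtain A where A: "A \<subseteq> rcosets H" "card A = m_coset G H" "\<not> self_separable G A"
    using m_coset_attained[OF assms(1)] .
  let ?B = "(\<lambda>c. K <#> c) ` A"
  have "\<not> self_separable G ?B"
  proof (rule not_self_separable_image[OF _ A(3)])
    show "K <#> (a #> x) = (K <#> a) #> x" if "a \<in> A" "x \<in> carrier G" for a x
      using that A(1) set_mult_rcos_rcosets[OF assms(1,2)] by blast
  qed
  moreover have "?B \<subseteq> rcosets K"
    using A(1) set_mult_image_rcosets[OF assms(1-3)] by blast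
  ultimately have "m_coset G K \<le> card ?B"
    by (intro m_coset_le_card)
  also have "\<dots> \<le> card A"
    using A(1) finite_rcosets[OF assms(1,4)] finite_subset card_image_le by blast
  finally show ?thesis using A(2) by simp
qed

lemma card_mult_m_coset_le:
  assumes "subgroup H G" "subgroup K G" "H \<subseteq> K" "finite (carrier G)"
  shows "card H * m_coset G H \<le> card K * m_coset G K"
proof -
  obtain B where B: "B \<subseteq> rcosets K" "card B = m_coset G K" "\<not> self_separable G B"
    using m_coset_attained[OF assms(2)] .
  let ?A = "rcosets H \<inter> (\<lambda>c. K <#> c) -` B"
  have "\<not> self_separable G ?A"
  proof (rule not_self_separable_vimage[OF assms(1) _ _ B(3)])
    show "K <#> (c #> x) = (K <#> c) #> x" if "c \<in> rcosets H" "x \<in> carrier G" for c x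
      using that set_mult_rcos_rcosets[OF assms(1,2)] by blast
    show "B \<subseteq> (\<lambda>c. K <#> c) ` (rcosets H)"
      using B(1) set_mult_image_rcosets[OF assms(1-3)] by simp
  qed
  then have "card H * m_coset G H \<le> card H * card ?A"
    by (simp add: m_coset_le_card)
  also have "\<dots> = card (\<Union>?A)"
    using card_Union_rcosets[OF assms(1,4)] by simp
  also have "\<dots> \<le> card (\<Union>B)"
  proof (rule card_mono)
    have "\<Union>B \<subseteq> carrier G"
      using B(1) rcosets_part_G[OF assms(2)] by blast
    then show "finite (\<Union>B)"
      using assms(4) finite_subset by blast
    have "c \<subseteq> K <#> c" if "c \<in> rcosets H" for c
      using that subset_set_mult_subgroup[OF assms(2)] rcosets_subset_PowG[OF assms(1)] by blast
    then show "\<Union>?A \<subseteq> \<Union>B" by blast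
  qed
  also have "\<dots> = card K * m_coset G K"
    using card_Union_rcosets[OF assms(2,4) B(1)] B(2) by simp
  finally show ?thesis .
qed

end

theorem lemma3p3:
  fixes G :: "('a, 'b) monoid_scheme" and H K :: "'a set"
  assumes "group G" and "finite (carrier G)"
    and "subgroup H G" and "subgroup K G" and "H \<subseteq> K"
    and "core_free G H" and "core_free G K"
    and "card (rcosets\<^bsub>G\<^esub> K) \<ge> 2"
  shows "real (m_coset G H) / (real (card K) / real (card H)) \<le> real (m_coset G K)
       \<and> m_coset G K \<le> m_coset G H"
proof
  interpret group G by fact
  have "0 < card H" "0 < card K"
    using assms(2-4) subgroup.finite_imp_card_positive by blast+
  moreover have "real (card H) * real (m_coset G H) \<le> real (card K) * real (m_coset G K)"
    using card_mult_m_coset_le[OF assms(3-5,2)] by (metis of_nat_le_iff of_nat_mult)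
  ultimately show "real (m_coset G H) / (real (card K) / real (card H)) \<le> real (m_coset G K)"
    by (simp add: field_simps mult.commute)
  show "m_coset G K \<le> m_coset G H"
    using m_coset_antimono[OF assms(3-5,2)] .
qed

end
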